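(* Let $F$ be a diagonal free self-map of $\mathbb{T}^n$. Let $z\in\mathbb{R}^n$ and $r\in\mathbb{R}_{\ge0}$. If the Hilbert ball $B_H(z,r)$ is contained in $\mathcal{S}(F)$, then $r\le\mathbf{b}(F(z)-z)$.
   Context: $\mathbb{T}=\mathbb{R}\cup\{-\infty\}$, ordered entrywise on $\mathbb{T}^n$. A self-map $F$ of $\mathbb{T}^n$ is order-preserving if $x\le y\Rightarrow F(x)\le F(y)$, and additively homogeneous if $F(\lambda+x)=\lambda+F(x)$ for all $\lambda\in\mathbb{T}$, $x\in\mathbb{T}^n$. An order-preserving, additively homogeneous self-map $F$ of $\mathbb{T}^n$ is diagonal free if for every $i\in\{1,\dots,n\}$ and all $x,y\in\mathbb{R}^n$ with $x_j=y_j$ for all $j\ne i$, one has $F_i(x)=F_i(y)$. For a vector $x$, $\mathbf{t}(x)=\max_i x_i$, $\mathbf{b}(x)=\min_i x_i$; $\|x\|_H=\mathbf{t}(x)-\mathbf{b}(x)$ on $\mathbb{R}^n$, and $B_H(z,r)=\{x\in\mathbb{R}^n: \|x-z\|_H\le r\}$. $\mathcal{S}(F)=\{x\in\mathbb{T}^n: x\le F(x)\}$. *)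

theory Defs
  imports "HOL-Library.Extended_Real"
begin

text \<open>The tropical semifield T = R \<union> {-\<infinity>}, realised inside ereal as the
  extended reals different from +\<infinity>. Vectors in T^n are functions from a
  finite index type 'n (with CARD('n) = n) to ereal whose entries lie in T.\<close>

definition T_set :: "ereal set" where
  "T_set = {x. x \<noteq> PInfty}"

definition Tvecs :: "('n \<Rightarrow> ereal) set" where
  "Tvecs = {x. \<forall>i. x i \<in> T_set}"

definition emb :: "('n \<Rightarrow> real) \<Rightarrow> ('n \<Rightarrow> ereal)" where
  "emb x = (\<lambda>i. ereal (x i))"

definition self_map_T :: "(('n \<Rightarrow> ereal) \<Rightarrow> ('n \<Rightarrow> ereal)) \<Rightarrow> bool" where
  "self_map_T F \<longleftrightarrow> (\<forall>x\<in>Tvecs. F x \<in> Tvecs)"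

definition order_preserving_T :: "(('n \<Rightarrow> ereal) \<Rightarrow> ('n \<Rightarrow> ereal)) \<Rightarrow> bool" where
  "order_preserving_T F \<longleftrightarrow> (\<forall>x\<in>Tvecs. \<forall>y\<in>Tvecs. x \<le> y \<longrightarrow> F x \<le> F y)"

definition add_homogeneous_T :: "(('n \<Rightarrow> ereal) \<Rightarrow> ('n \<Rightarrow> ereal)) \<Rightarrow> bool" where
  "add_homogeneous_T F \<longleftrightarrow>
     (\<forall>l\<in>T_set. \<forall>x\<in>Tvecs. F (\<lambda>i. l + x i) = (\<lambda>i. l + F x i))"

definition diagonal_free :: "(('n \<Rightarrow> ereal) \<Rightarrow> ('n \<Rightarrow> ereal)) \<Rightarrow> bool" where
  "diagonal_free F \<longleftrightarrow> self_map_T F \<and> order_preserving_T F \<and> add_homogeneous_T F \<and>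
     (\<forall>i. \<forall>x y :: 'n \<Rightarrow> real. (\<forall>j. j \<noteq> i \<longrightarrow> x j = y j) \<longrightarrow> F (emb x) i = F (emb y) i)"

definition tmax :: "('n::finite \<Rightarrow> 'a::linorder) \<Rightarrow> 'a" where
  "tmax x = Max (range x)"

definition bmin :: "('n::finite \<Rightarrow> 'a::linorder) \<Rightarrow> 'a" where
  "bmin x = Min (range x)"

definition hilbert_norm :: "('n::finite \<Rightarrow> real) \<Rightarrow> real" where
  "hilbert_norm x = tmax x - bmin x"

definition hilbert_ball :: "('n::finite \<Rightarrow> real) \<Rightarrow> real \<Rightarrow> ('n \<Rightarrow> real) set" where
  "hilbert_ball z r = {x. hilbert_norm (x - z) \<le> r}"

definition subeig :: "(('n \<Rightarrow> ereal) \<Rightarrow> ('n \<Rightarrow> ereal)) \<Rightarrow> ('n \<Rightarrow> ereal) set" where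
  "subeig F = {x\<in>Tvecs. x \<le> F x}"

end

theory Submission
  imports Defs
begin

text \<open>Raising the single coordinate \<open>z i\<close> by \<open>r\<close> stays in the Hilbert ball \<open>B_H(z, r)\<close>,
  so the raised point is a sub-eigenvector of \<open>F\<close>. Since \<open>F\<close> is diagonal free, the
  \<open>i\<close>-th coordinate of its image does not notice the raise, whence
  \<open>z i + r \<le> F(z) i\<close> for every \<open>i\<close>.\<close>

lemma le_bmin_iff:
  fixes x :: "'n::finite \<Rightarrow> 'a::linorder"
  shows "a \<le> bmin x \<longleftrightarrow> (\<forall>i. a \<le> x i)"
  unfolding bmin_def by (subst Min_ge_iff) auto

lemma tmax_le_iff:
  fixes x :: "'n::finite \<Rightarrow> 'a::linorder"
  shows "tmax x \<le> a \<longleftrightarrow> (\<forall>i. x i \<le> a)"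
  unfolding tmax_def by (subst Max_le_iff) auto

lemma fun_upd_add_in_hilbert_ball:
  assumes "0 \<le> r"
  shows "z(i := z i + r) \<in> hilbert_ball z r"
proof -
  have diff: "z(i := z i + r) - z = (\<lambda>j. if j = i then r else 0)"
    by (auto simp: fun_eq_iff)
  have "tmax (z(i := z i + r) - z) \<le> r" and "0 \<le> bmin (z(i := z i + r) - z)"
    unfolding diff tmax_le_iff le_bmin_iff using assms by auto
  then show ?thesis
    by (simp add: hilbert_ball_def hilbert_norm_def)
qed

lemma diagonal_free_fun_upd:
  assumes "diagonal_free F"
  shows "F (emb (x(i := a))) i = F (emb x) i"
  using assms unfolding diagonal_free_def by (metis fun_upd_other)

lemma ereal_le_minus_iff_add_le:
  "ereal r \<le> y - ereal c \<longleftrightarrow> ereal (c + r) \<le> y"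
  by (cases y) (auto simp: algebra_simps)

theorem mainTheorem5:
  fixes F :: "('n::finite \<Rightarrow> ereal) \<Rightarrow> ('n \<Rightarrow> ereal)"
    and z :: "'n \<Rightarrow> real" and r :: real
  assumes "diagonal_free F"
    and "r \<ge> 0"
    and "emb ` hilbert_ball z r \<subseteq> subeig F"
  shows "ereal r \<le> bmin (\<lambda>i. F (emb z) i - ereal (z i))"
proof (unfold le_bmin_iff, intro allI)
  fix i
  let ?x = "z(i := z i + r)"
  have "emb ?x \<in> subeig F"
    using assms(3) fun_upd_add_in_hilbert_ball[OF assms(2)] by blast
  then have "emb ?x i \<le> F (emb ?x) i"
    by (simp add: subeig_def le_fun_def)
  also have "\<dots> = F (emb z) i"
    using assms(1) by (rule diagonal_free_fun_upd)
  finally show "ereal r \<le> F (emb z) i - ereal (z i)"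
    by (simp add: emb_def ereal_le_minus_iff_add_le)
qed

end
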